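(* Consider a semi-discrete split-form discontinuous Galerkin spectral element approximation of a hyperbolic conservation law on an element $E$ whose total discrete mathematical entropy $\mathcal{E}(t)$ satisfies $$\frac{d\mathcal{E}}{dt} + \int_{\partial E,N}\Big\{F_n^{\mathrm{ent}} + V^T\big(F^*_n - F_n\big)\Big\}\hat s\,dS \le 0,$$ where $\int_{\partial E,N}$ denotes Gauss–Lobatto quadrature (with positive weights) over the boundary, $\hat s>0$ is the scaling between physical and reference normals, $V$ is the vector of entropy variables, $F_n$ is the physical normal flux, $F^*_n$ is the numerical boundary flux, and $F_n^{\mathrm{ent}}$ is the normal entropy flux. Suppose that at each boundary quadrature node the entropy flux can be written as $F_n^{\mathrm{ent}} = U^T A U = W^T\Lambda W$ with $A = T\Lambda T^T$, $\Lambda$ real diagonal, $W = T^T U$ for some vector of variables $U$. Define $\Lambda^{\pm} = \tfrac12(\Lambda\pm|\Lambda|)$, let $I^-$ be the diagonal indicator matrix selecting the negative diagonal entries of $\Lambda$, $W^- = I^- T^T U$, and $\sqrt{|\Lambda^-|}$ the entrywise square root of $|\Lambda^-|$. If at the (inflow/outflow) boundary nodes, with external data specified as a vector $G$, the numerical boundary flux satisfies $$V^T\big(F^*_n - F_n\big) = U^T\Big(2\,T\,I^-\sqrt{|\Lambda^-|}\big(\sqrt{|\Lambda^-|}\,W^- - G\big)\Big),$$ then $$\frac{d\mathcal{E}}{dt} \le \int_{\partial E,N} G^T G\,\hat s\,dS,$$ i.e. the entropy rate is bounded solely by the boundary data.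
   Context: The mathematical entropy $S(q)$ is a strictly convex function of the conserved variables $q$, the entropy variables are $V = \partial S/\partial q$, and the entropy flux $f^{\mathrm{ent}}$ satisfies the compatibility condition $V^T f_q = f^{\mathrm{ent}}_q$. $|\Lambda|$ denotes the diagonal matrix of absolute values of the entries of $\Lambda$. The entropy inequality assumed in the claim is the one satisfied by split-form DGSEM with entropy conservative/stable interface fluxes, so that only physical boundary terms remain. *)

theory Defs
  imports "HOL-Analysis.Analysis"
begin

definition is_diag :: "real^'m^'m \<Rightarrow> bool" where
  "is_diag M \<longleftrightarrow> (\<forall>i j. i \<noteq> j \<longrightarrow> M$i$j = 0)"

definition mat_abs :: "real^'m^'m \<Rightarrow> real^'m^'m" where
  "mat_abs M = (\<chi> i j. \<bar>M$i$j\<bar>)"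

definition mat_sqrt :: "real^'m^'m \<Rightarrow> real^'m^'m" where
  "mat_sqrt M = (\<chi> i j. sqrt (M$i$j))"

definition lam_plus :: "real^'m^'m \<Rightarrow> real^'m^'m" where
  "lam_plus L = (1/2) *\<^sub>R (L + mat_abs L)"

definition lam_minus :: "real^'m^'m \<Rightarrow> real^'m^'m" where
  "lam_minus L = (1/2) *\<^sub>R (L - mat_abs L)"

definition ind_minus :: "real^'m^'m \<Rightarrow> real^'m^'m" where
  "ind_minus L = (\<chi> i j. if i = j \<and> L$i$i < 0 then 1 else 0)"

end

theory Submission
  imports Defs
begin

text \<open>In the characteristic variables \<open>W = T\<^sup>T U\<close> everything is diagonal, so the
  boundary contribution splits into scalar terms \<open>\<lambda> w\<^sup>2 + (boundary penalty)\<close>, one per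
  characteristic. An outgoing characteristic (\<open>\<lambda> \<ge> 0\<close>) is not penalized and contributes
  \<open>\<lambda> w\<^sup>2 \<ge> 0\<close>. For an incoming one (\<open>\<lambda> < 0\<close>, \<open>\<sigma> = sqrt (-\<lambda>)\<close>) the penalty
  \<open>2 w \<sigma> (\<sigma> w - g)\<close> turns the term into \<open>(\<sigma> w - g)\<^sup>2 - g\<^sup>2 \<ge> -g\<^sup>2\<close>. Hence each node
  contributes at least \<open>-G\<^sup>T G\<close>, and the positive quadrature weights and normal
  scalings carry this bound into the entropy inequality.\<close>

lemma matrix_vector_mult_diag_nth:
  fixes M :: "real^'m^'m"
  assumes "is_diag M"
  shows "(M *v x) $ i = M$i$i * x$i"
proof -
  have "(M *v x) $ i = (\<Sum>j\<in>UNIV. M$i$j * x$j)"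
    by (simp add: matrix_vector_mult_def)
  also have "\<dots> = M$i$i * x$i"
    using assms unfolding is_diag_def
    by (subst sum.remove[of UNIV i]) (auto intro!: sum.neutral)
  finally show ?thesis .
qed

lemma inner_diag_matrix_vector:
  fixes M :: "real^'m^'m"
  assumes "is_diag M"
  shows "x \<bullet> (M *v y) = (\<Sum>i\<in>UNIV. M$i$i * x$i * y$i)"
  by (simp add: inner_vec_def matrix_vector_mult_diag_nth[OF assms] algebra_simps)

lemma inner_matrix_vector_transpose:
  fixes A :: "real^'n^'m"
  shows "x \<bullet> (A *v y) = (transpose A *v x) \<bullet> y"
  by (simp add: dot_lmul_matrix[symmetric] transpose_matrix_vector)

lemma is_diag_ind_minus [simp]: "is_diag (ind_minus L)"
  unfolding ind_minus_def is_diag_def by simp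

lemma is_diag_mat_sqrt [simp]: "is_diag M \<Longrightarrow> is_diag (mat_sqrt M)"
  unfolding is_diag_def mat_sqrt_def by simp

lemma is_diag_mat_abs [simp]: "is_diag M \<Longrightarrow> is_diag (mat_abs M)"
  unfolding is_diag_def mat_abs_def by simp

lemma is_diag_lam_minus [simp]: "is_diag L \<Longrightarrow> is_diag (lam_minus L)"
  unfolding is_diag_def lam_minus_def mat_abs_def by simp

lemma ind_minus_diag_nth: "ind_minus L $i$i = (if L$i$i < 0 then 1 else 0)"
  unfolding ind_minus_def by simp

lemma sqrt_abs_lam_minus_diag_nth:
  "mat_sqrt (mat_abs (lam_minus L)) $i$i = (if L$i$i < 0 then sqrt (- L$i$i) else 0)"
  unfolding mat_sqrt_def mat_abs_def lam_minus_def by simp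

lemma characteristic_penalty_lower_bound:
  fixes l w g :: real
  defines "\<iota> \<equiv> if l < 0 then 1 else 0"
    and "\<sigma> \<equiv> if l < 0 then sqrt (- l) else 0"
  shows "- (g * g) \<le> l * w * w + 2 * (\<iota> * w * (\<sigma> * (\<sigma> * (\<iota> * w) - g)))"
proof (cases "l < 0")
  case True
  then have "l = - (\<sigma> * \<sigma>)"
    by (simp add: \<sigma>_def flip: power2_eq_square)
  then have "l * w * w + 2 * (\<iota> * w * (\<sigma> * (\<sigma> * (\<iota> * w) - g))) = (\<sigma> * w - g)\<^sup>2 - g * g"
    using True by (simp add: \<iota>_def power2_eq_square algebra_simps)
  then show ?thesis
    using zero_le_power2[of "\<sigma> * w - g"] by linarith
next
  case False
  then have "l * w * w + 2 * (\<iota> * w * (\<sigma> * (\<sigma> * (\<iota> * w) - g))) = l * (w * w)"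
    by (simp add: \<iota>_def)
  moreover have "0 \<le> l * (w * w)"
    using False by simp
  ultimately show ?thesis
    using zero_le_square[of g] by linarith
qed

lemma characteristic_boundary_term_lower_bound:
  fixes W G :: "real^'m" and L :: "real^'m^'m"
  assumes "is_diag L"
  defines "I \<equiv> ind_minus L"
    and "S \<equiv> mat_sqrt (mat_abs (lam_minus L))"
  shows "- (G \<bullet> G) \<le> W \<bullet> (L *v W) + 2 * (W \<bullet> (I *v (S *v (S *v (I *v W) - G))))"
proof -
  have "- (G \<bullet> G) = (\<Sum>i\<in>UNIV. - (G$i * G$i))"
    by (simp add: inner_vec_def sum_negf)
  also have "\<dots> \<le> (\<Sum>i\<in>UNIV. L$i$i * W$i * W$i
                   + 2 * (I$i$i * W$i * (S$i$i * (S$i$i * (I$i$i * W$i) - G$i))))"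
    unfolding I_def S_def ind_minus_diag_nth sqrt_abs_lam_minus_diag_nth
    by (intro sum_mono characteristic_penalty_lower_bound)
  also have "\<dots> = W \<bullet> (L *v W) + 2 * (W \<bullet> (I *v (S *v (S *v (I *v W) - G))))"
    unfolding I_def S_def
    by (simp add: inner_diag_matrix_vector matrix_vector_mult_diag_nth assms
        sum.distrib sum_distrib_left mult.assoc)
  finally show ?thesis .
qed

lemma boundary_term_lower_bound:
  fixes U G :: "real^'m" and T L :: "real^'m^'m"
  assumes "is_diag L"
  shows "- (G \<bullet> G) \<le> (transpose T *v U) \<bullet> (L *v (transpose T *v U)) +
     U \<bullet> (2 *\<^sub>R (T *v (ind_minus L *v
           (mat_sqrt (mat_abs (lam_minus L)) *v
             (mat_sqrt (mat_abs (lam_minus L)) *v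
                 ((ind_minus L ** transpose T) *v U) - G)))))"
  using characteristic_boundary_term_lower_bound[OF assms, of G "transpose T *v U"]
  by (simp add: inner_matrix_vector_transpose[of U T] matrix_vector_mul_assoc[symmetric])

theorem theorem2:
  fixes Nd :: "'k set"
    and w s :: "'k \<Rightarrow> real"
    and E :: "real \<Rightarrow> real" and t dE :: real
    and U V Fstar Fn G :: "'k \<Rightarrow> real^'m"
    and T Lam :: "'k \<Rightarrow> real^'m^'m"
    and Fent :: "'k \<Rightarrow> real"
  assumes fin: "finite Nd"
    and w_pos: "\<And>k. k \<in> Nd \<Longrightarrow> w k > 0"
    and s_pos: "\<And>k. k \<in> Nd \<Longrightarrow> s k > 0"
    and deriv: "(E has_real_derivative dE) (at t)"
    and entropy_ineq:
      "dE + (\<Sum>k\<in>Nd. w k * ((Fent k + V k \<bullet> (Fstar k - Fn k)) * s k)) \<le> 0"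
    and diag: "\<And>k. k \<in> Nd \<Longrightarrow> is_diag (Lam k)"
    and Fent_A: "\<And>k. k \<in> Nd \<Longrightarrow>
        Fent k = U k \<bullet> ((T k ** Lam k ** transpose (T k)) *v U k)"
    and Fent_W: "\<And>k. k \<in> Nd \<Longrightarrow>
        Fent k = (transpose (T k) *v U k) \<bullet> (Lam k *v (transpose (T k) *v U k))"
    and bc: "\<And>k. k \<in> Nd \<Longrightarrow>
        V k \<bullet> (Fstar k - Fn k) =
        U k \<bullet> (2 *\<^sub>R (T k *v (ind_minus (Lam k) *v
           (mat_sqrt (mat_abs (lam_minus (Lam k))) *v
             (mat_sqrt (mat_abs (lam_minus (Lam k))) *v
                 ((ind_minus (Lam k) ** transpose (T k)) *v U k) - G k)))))"
  shows "dE \<le> (\<Sum>k\<in>Nd. w k * ((G k \<bullet> G k) * s k))"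
proof -
  have "- (\<Sum>k\<in>Nd. w k * ((G k \<bullet> G k) * s k))
        \<le> (\<Sum>k\<in>Nd. w k * ((Fent k + V k \<bullet> (Fstar k - Fn k)) * s k))"
    unfolding sum_negf[symmetric]
  proof (rule sum_mono)
    fix k assume k: "k \<in> Nd"
    have node_bound: "- (G k \<bullet> G k) \<le> Fent k + V k \<bullet> (Fstar k - Fn k)"
      using boundary_term_lower_bound[OF diag[OF k]] Fent_W[OF k] bc[OF k] by simp
    have "0 \<le> w k * s k"
      using w_pos[OF k] s_pos[OF k] by simp
    from mult_left_mono[OF node_bound this]
    show "- (w k * ((G k \<bullet> G k) * s k)) \<le> w k * ((Fent k + V k \<bullet> (Fstar k - Fn k)) * s k)"
      by (simp add: algebra_simps)
  qed
  then show ?thesis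
    using entropy_ineq by linarith
qed

end
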